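(* Consider the quantized sensor-network model described in the context, and assume all attacks are estimable, i.e. $\mathbf{J}_{\boldsymbol\tau^{(p)}}$ is nonsingular for every $p=1,\dots,P$; assume also that $\mathbf{J}_{\mathcal{A}_0}$ and $\mathbf{J}_{\boldsymbol\Theta}$ are nonsingular. Then the Cramér–Rao bound for $\boldsymbol\theta$ satisfies $$\big[\mathbf{J}_{\boldsymbol\Theta}^{-1}\big]_{1:D_{\boldsymbol\theta}}\preceq \mathbf{J}_{\mathcal{A}_0}^{-1}$$ in the positive semidefinite order, and equality holds if and only if for every $p=1,\dots,P$, $$\mathscr{R}\big(\mathbf{V}_{\boldsymbol\theta^{(p)}}\boldsymbol\Lambda_{\boldsymbol\theta^{(p)}}^T\big)\subseteq\mathscr{R}\big(\mathbf{V}_{\boldsymbol\tau^{(p)}}\boldsymbol\Lambda_{\boldsymbol\tau^{(p)}}^T\big).$$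
   Context: Sensors are indexed by $j\in\{1,\dots,N\}$. Sensor $j$ acquires $K_j$ scalar measurements $\tilde x_{jk}$, $k=1,\dots,K_j$, each quantized by an $R_j$-level quantizer with fixed disjoint regions $I_j^{(1)},\dots,I_j^{(R_j)}$ partitioning $\mathbb{R}$, producing $\tilde u_{jk}=\sum_{r=1}^{R_j} r\,\mathbb{1}\{\tilde x_{jk}\in I_j^{(r)}\}$. The sensor set is partitioned into disjoint sets $\mathcal{A}_0$ (unattacked) and $\mathcal{A}_1,\dots,\mathcal{A}_P$ (attacked, grouped by attack). Unknown deterministic parameters: $\boldsymbol\theta\in\mathbb{R}^{D_{\boldsymbol\theta}}$ and $\boldsymbol\tau^{(p)}\in\mathbb{R}^{D_p}$, $p=1,\dots,P$. The $\{\tilde x_{jk}\}$ are independent; $\tilde x_{jk}$ has pdf $f_{jk}(\cdot\mid\boldsymbol\theta)$ if $j\in\mathcal{A}_0$ and $g_{jk}(\cdot\mid\boldsymbol\theta,\boldsymbol\tau^{(p)})$ if $j\in\mathcal{A}_p$, $p\ge1$. Let $p_{jr}^{(k)}=\Pr(\tilde u_{jk}=r)$ (the integral of the corresponding pdf over $I_j^{(r)}$), assumed positive and differentiable in the parameters. Let $\boldsymbol\Theta=[\boldsymbol\theta^T,(\boldsymbol\tau^{(1)})^T,\dots,(\boldsymbol\tau^{(P)})^T]^T$ and $\mathbf{J}_{\boldsymbol\Theta}=\sum_{j=1}^N\sum_{k=1}^{K_j}\sum_{r=1}^{R_j}\frac{1}{p_{jr}^{(k)}}\frac{\partial p_{jr}^{(k)}}{\partial\boldsymbol\Theta}\big[\frac{\partial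 p_{jr}^{(k)}}{\partial\boldsymbol\Theta}\big]^T$ (the Fisher information matrix of the quantized data). For $p\ge0$, $\mathbf{J}_{\mathcal{A}_p}=\sum_{j\in\mathcal{A}_p}\sum_{k}\sum_{r}\frac{1}{p_{jr}^{(k)}}\frac{\partial p_{jr}^{(k)}}{\partial\boldsymbol\theta}\big[\frac{\partial p_{jr}^{(k)}}{\partial\boldsymbol\theta}\big]^T$, and for $p\ge1$, $\mathbf{J}_{\boldsymbol\tau^{(p)}}=\sum_{j\in\mathcal{A}_p}\sum_{k}\sum_{r}\frac{1}{p_{jr}^{(k)}}\frac{\partial p_{jr}^{(k)}}{\partial\boldsymbol\tau^{(p)}}\big[\frac{\partial p_{jr}^{(k)}}{\partial\boldsymbol\tau^{(p)}}\big]^T$. For $p\ge1$, let $M_p=\sum_{j\in\mathcal{A}_p}K_jR_j$ and define $\boldsymbol\Phi_{\boldsymbol\theta^{(p)}}\in\mathbb{R}^{D_{\boldsymbol\theta}\times M_p}$ and $\boldsymbol\Phi_{\boldsymbol\tau^{(p)}}\in\mathbb{R}^{D_p\times M_p}$ as the matrices whose columns, indexed by the triples $(j,k,r)$ with $j\in\mathcal{A}_p$, $1\le k\le K_j$, $1\le r\le R_j$ (in the same fixed order for both matrices), are respectively $(p_{jr}^{(k)})^{-1/2}\,\partial p_{jr}^{(k)}/\partial\boldsymbol\theta$ and $(p_{jr}^{(k)})^{-1/2}\,\partial p_{jr}^{(k)}/\partial\boldsymbol\tau^{(p)}$. Let $\boldsymbol\Phi_{\boldsymbol\theta^{(p)}}=\mathbf{U}_{\boldsymbol\theta^{(p)}}\boldsymbol\Lambda_{\boldsymbol\theta^{(p)}}\mathbf{V}_{\boldsymbol\theta^{(p)}}^T$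 and $\boldsymbol\Phi_{\boldsymbol\tau^{(p)}}=\mathbf{U}_{\boldsymbol\tau^{(p)}}\boldsymbol\Lambda_{\boldsymbol\tau^{(p)}}\mathbf{V}_{\boldsymbol\tau^{(p)}}^T$ be singular value decompositions. $\mathscr{R}(\cdot)$ denotes range (column space), $[\mathbf{A}]_{1:D}$ denotes the leading $D\times D$ principal submatrix, and $\preceq$ is the positive semidefinite (Loewner) order. *)

theory Defs
  imports "HOL-Analysis.Set_Integral" "HOL-Analysis.Lebesgue_Measure" "Jordan_Normal_Form.Matrix"
begin

definition vnorm :: "real Matrix.vec \<Rightarrow> real" where
  "vnorm v = sqrt (scalar_prod v v)"

definition has_grad :: "nat \<Rightarrow> (real Matrix.vec \<Rightarrow> real) \<Rightarrow> real Matrix.vec \<Rightarrow> real Matrix.vec \<Rightarrow> bool" where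
  "has_grad n F g x \<longleftrightarrow> g \<in> carrier_vec n \<and>
     (\<forall>e>0. \<exists>d>0. \<forall>h\<in>carrier_vec n. vnorm h < d \<longrightarrow>
        \<bar>F (x + h) - F x - scalar_prod g h\<bar> \<le> e * vnorm h)"

definition differentiable_vec :: "nat \<Rightarrow> (real Matrix.vec \<Rightarrow> real) \<Rightarrow> real Matrix.vec \<Rightarrow> bool" where
  "differentiable_vec n F x \<longleftrightarrow> (\<exists>g. has_grad n F g x)"

definition grad :: "nat \<Rightarrow> (real Matrix.vec \<Rightarrow> real) \<Rightarrow> real Matrix.vec \<Rightarrow> real Matrix.vec" where
  "grad n F x = (SOME g. has_grad n F g x)"

section \<open>Parameter layout  Theta = [theta; tau^(1); ...; tau^(P)]\<close>

definition tot_dim :: "nat \<Rightarrow> (nat \<Rightarrow> nat) \<Rightarrow> nat \<Rightarrow> nat" where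
  "tot_dim Dth D P = Dth + (\<Sum>p\<in>{1..P}. D p)"

text \<open>0-based offset of the block tau^(p) inside Theta\<close>
definition par_off :: "nat \<Rightarrow> (nat \<Rightarrow> nat) \<Rightarrow> nat \<Rightarrow> nat" where
  "par_off Dth D p = Dth + (\<Sum>q\<in>{1..<p}. D q)"

definition theta_part :: "nat \<Rightarrow> real Matrix.vec \<Rightarrow> real Matrix.vec" where
  "theta_part Dth Th = Matrix.vec Dth (\<lambda>i. Th $ i)"

definition tau_part :: "nat \<Rightarrow> (nat \<Rightarrow> nat) \<Rightarrow> nat \<Rightarrow> real Matrix.vec \<Rightarrow> real Matrix.vec" where
  "tau_part Dth D p Th = Matrix.vec (D p) (\<lambda>i. Th $ (par_off Dth D p + i))"

text \<open>Index of the attack group containing sensor j (0 = unattacked).\<close>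
definition sensor_group :: "(nat \<Rightarrow> nat set) \<Rightarrow> nat \<Rightarrow> nat \<Rightarrow> nat" where
  "sensor_group A P j = (THE p. p \<le> P \<and> j \<in> A p)"

text \<open>p_{jr}^{(k)} as a function of the full parameter vector Theta:
  integral of f_{jk}(.|theta) (unattacked) resp. g_{jk}(.|theta,tau^(p)) (attacked, j in A_p)
  over the quantization region I_j^{(r)}.\<close>
definition qprob :: "nat \<Rightarrow> (nat \<Rightarrow> nat) \<Rightarrow> (nat \<Rightarrow> nat set) \<Rightarrow> nat \<Rightarrow> (nat \<Rightarrow> nat \<Rightarrow> real set)
    \<Rightarrow> (nat \<Rightarrow> nat \<Rightarrow> real \<Rightarrow> real Matrix.vec \<Rightarrow> real)
    \<Rightarrow> (nat \<Rightarrow> nat \<Rightarrow> real \<Rightarrow> real Matrix.vec \<Rightarrow> real Matrix.vec \<Rightarrow> real)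
    \<Rightarrow> nat \<Rightarrow> nat \<Rightarrow> nat \<Rightarrow> real Matrix.vec \<Rightarrow> real" where
  "qprob Dth D A P I f g j k r Th =
     (if j \<in> A 0 then (LINT x:I j r|lborel. f j k x (theta_part Dth Th))
      else (LINT x:I j r|lborel. g j k x (theta_part Dth Th) (tau_part Dth D (sensor_group A P j) Th)))"

text \<open>Thus J_Theta = fisher_block n 0 n Pr {1..N} K R Th, J_{A_p} = fisher_block n 0 Dth Pr (A p) K R Th,
  J_{tau^(p)} = fisher_block n (par_off Dth D p) (D p) Pr (A p) K R Th.\<close>
definition fisher_block :: "nat \<Rightarrow> nat \<Rightarrow> nat \<Rightarrow> (nat \<Rightarrow> nat \<Rightarrow> nat \<Rightarrow> real Matrix.vec \<Rightarrow> real)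
    \<Rightarrow> nat set \<Rightarrow> (nat \<Rightarrow> nat) \<Rightarrow> (nat \<Rightarrow> nat) \<Rightarrow> real Matrix.vec \<Rightarrow> real mat" where
  "fisher_block n off m Pr S K R Th = mat m m (\<lambda>(a,b).
     \<Sum>j\<in>S. \<Sum>k\<in>{1..K j}. \<Sum>r\<in>{1..R j}.
       (grad n (Pr j k r) Th $ (off + a)) * (grad n (Pr j k r) Th $ (off + b)) / Pr j k r Th)"

definition triples :: "nat set \<Rightarrow> (nat \<Rightarrow> nat) \<Rightarrow> (nat \<Rightarrow> nat) \<Rightarrow> (nat \<times> nat \<times> nat) list" where
  "triples S K R = concat (map (\<lambda>j. concat (map (\<lambda>k. map (\<lambda>r. (j,k,r)) [1..<Suc (R j)]) [1..<Suc (K j)]))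
                      (sorted_list_of_set S))"

definition Phi_mat :: "nat \<Rightarrow> nat \<Rightarrow> nat \<Rightarrow> (nat \<Rightarrow> nat \<Rightarrow> nat \<Rightarrow> real Matrix.vec \<Rightarrow> real)
    \<Rightarrow> nat set \<Rightarrow> (nat \<Rightarrow> nat) \<Rightarrow> (nat \<Rightarrow> nat) \<Rightarrow> real Matrix.vec \<Rightarrow> real mat" where
  "Phi_mat n off m Pr S K R Th = mat_of_cols m
     (map (\<lambda>(j,k,r). Matrix.vec m (\<lambda>a. grad n (Pr j k r) Th $ (off + a) / sqrt (Pr j k r Th)))
          (triples S K R))"

definition is_svd :: "real mat \<Rightarrow> real mat \<Rightarrow> real mat \<Rightarrow> real mat \<Rightarrow> bool" where
  "is_svd Ph U L V \<longleftrightarrow> (let d = dim_row Ph; M = dim_col Ph in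
     U \<in> carrier_mat d d \<and> L \<in> carrier_mat d M \<and> V \<in> carrier_mat M M \<and>
     transpose_mat U * U = 1\<^sub>m d \<and> U * transpose_mat U = 1\<^sub>m d \<and>
     transpose_mat V * V = 1\<^sub>m M \<and> V * transpose_mat V = 1\<^sub>m M \<and>
     (\<forall>i<d. \<forall>j<M. i \<noteq> j \<longrightarrow> L $$ (i,j) = 0) \<and>
     (\<forall>i<min d M. 0 \<le> L $$ (i,i)) \<and>
     (\<forall>i j. i \<le> j \<and> j < min d M \<longrightarrow> L $$ (j,j) \<le> L $$ (i,i)) \<and>
     Ph = U * L * transpose_mat V)"

definition mat_range :: "real mat \<Rightarrow> real Matrix.vec set" where
  "mat_range A = {A *\<^sub>v x | x. x \<in> carrier_vec (dim_col A)}"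

definition lead_submat :: "nat \<Rightarrow> real mat \<Rightarrow> real mat" where
  "lead_submat m A = mat m m (\<lambda>(i,j). A $$ (i,j))"

text \<open>Matrix inverse (meaningful for invertible square matrices).\<close>
definition mat_inv :: "real mat \<Rightarrow> real mat" where
  "mat_inv A = (SOME B. inverts_mat A B \<and> inverts_mat B A)"

definition loewner_le :: "real mat \<Rightarrow> real mat \<Rightarrow> bool" where
  "loewner_le A B \<longleftrightarrow> (\<exists>n. A \<in> carrier_mat n n \<and> B \<in> carrier_mat n n \<and>
     transpose_mat A = A \<and> transpose_mat B = B \<and>
     (\<forall>x\<in>carrier_vec n. 0 \<le> scalar_prod x ((B - A) *\<^sub>v x)))"

end

theory Submission
  imports Defs
begin

(* With the normalised scores w_t = (p_t)^(-1/2) grad p_t, one for each quantised observation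
   t = (j, k, r), the Fisher information is the Gram matrix J_Theta = sum_t w_t w_t^T, and J_A0 is
   the leading block of the same sum over the unattacked observations. Scores of unattacked sensors
   vanish outside theta, scores of sensors in A_p vanish outside (theta, tau^(p)).

   For x in R^D_theta put y = J_Theta^-1 (x, 0) and z = J_A0^-1 x. Expanding J_Theta y = (x, 0)
   and J_A0 z = x gives
     x^T (J_A0^-1 - [J_Theta^-1]_(1:D_theta)) x
       = sum_(t unattacked) (<w_t, z> - <w_t, y>)^2 + sum_(t attacked) <w_t, y>^2,
   whence the Loewner inequality. Equality forces <w_t, y> = 0 for all attacked t; read off for
   x = J_A0 e_i, this writes the theta-part of every score of A_p as a fixed matrix C_p applied to
   its tau^(p)-part. Conversely, given such C_p, the vector y = (z, -C_1^T z, ..., -C_P^T z)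
   solves J_Theta y = (x, 0). Through the SVDs, R(V_theta Lambda_theta^T) = R(Phi_theta^T), and
   R(Phi_theta^T) is contained in R(Phi_tau^T) exactly when Phi_theta = C_p Phi_tau. *)

section \<open>Inverses and ranges of matrices\<close>

lemma mat_inv:
  assumes inv: "invertible_mat A" and A: "A \<in> carrier_mat n n"
  shows mat_inv_carrier: "mat_inv A \<in> carrier_mat n n"
    and mat_mult_mat_inv: "A * mat_inv A = 1\<^sub>m n"
    and mat_inv_mult_mat: "mat_inv A * A = 1\<^sub>m n"
proof -
  from inv obtain B where "inverts_mat A B \<and> inverts_mat B A"
    unfolding invertible_mat_def by blast
  then have "inverts_mat A (mat_inv A) \<and> inverts_mat (mat_inv A) A"
    unfolding mat_inv_def by (rule someI)
  then have right: "A * mat_inv A = 1\<^sub>m n" and left: "mat_inv A * A = 1\<^sub>m (dim_row (mat_inv A))"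
    unfolding inverts_mat_def using A by auto
  have "dim_col (mat_inv A) = n" using arg_cong[OF right, of dim_col] by simp
  moreover have "dim_row (mat_inv A) = n" using arg_cong[OF left, of dim_col] A by simp
  ultimately show carrier: "mat_inv A \<in> carrier_mat n n" by auto
  show "A * mat_inv A = 1\<^sub>m n" by (fact right)
  show "mat_inv A * A = 1\<^sub>m n" using left carrier by simp
qed

lemma mat_inv_mult_vec_eq:
  assumes "invertible_mat A" "A \<in> carrier_mat n n" "y \<in> carrier_vec n" "A *\<^sub>v y = x"
  shows "mat_inv A *\<^sub>v x = y"
  using assms mat_inv[OF assms(1,2)]
  by (metis assoc_mult_mat_vec one_mult_mat_vec)

lemma mult_vec_mat_inv:
  assumes "invertible_mat A" "A \<in> carrier_mat n n" "x \<in> carrier_vec n"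
  shows "A *\<^sub>v (mat_inv A *\<^sub>v x) = x"
  using assms mat_inv[OF assms(1,2)]
  by (metis assoc_mult_mat_vec one_mult_mat_vec)

lemma transpose_mat_inv:
  assumes inv: "invertible_mat A" and A: "A \<in> carrier_mat n n" and sym: "transpose_mat A = A"
  shows "transpose_mat (mat_inv A) = mat_inv A"
proof -
  let ?B = "mat_inv A"
  note B = mat_inv[OF inv A]
  have "transpose_mat ?B * A = transpose_mat (A * ?B)"
    using transpose_mult[OF A B(1)] sym by simp
  then have BtA: "transpose_mat ?B * A = 1\<^sub>m n" using B(2) by simp
  have "transpose_mat ?B = (transpose_mat ?B * A) * ?B"
    using B A by (simp add: assoc_mult_mat[of _ n n _ n _ n])
  then show ?thesis using BtA B(1) by simp
qed

lemma zero_mat_mult_vec [simp]: "v \<in> carrier_vec m \<Longrightarrow> (0\<^sub>m n m :: real mat) *\<^sub>v v = 0\<^sub>v n"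
  by (intro eq_vecI) (auto simp: scalar_prod_def)

lemma eq_mat_on_vecI:
  fixes M M' :: "real mat"
  assumes "M \<in> carrier_mat n m" "M' \<in> carrier_mat n m"
    and "\<And>x. x \<in> carrier_vec m \<Longrightarrow> M *\<^sub>v x = M' *\<^sub>v x"
  shows "M = M'"
proof (rule eq_matI)
  fix i j assume ij: "i < dim_row M'" "j < dim_col M'"
  have "(M *\<^sub>v unit_vec m j) $ i = (M' *\<^sub>v unit_vec m j) $ i"
    using assms(3) by simp
  then show "M $$ (i, j) = M' $$ (i, j)"
    using assms(1,2) ij by simp
qed (use assms in auto)

lemma mat_range_mult_invertible:
  fixes B :: "real mat"
  assumes B: "B \<in> carrier_mat m k" and Q: "Q \<in> carrier_mat k k" and Q': "Q' \<in> carrier_mat k k"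
    and QQ': "Q * Q' = 1\<^sub>m k"
  shows "mat_range (B * Q) = mat_range B"
proof
  show "mat_range (B * Q) \<subseteq> mat_range B"
    using B Q unfolding mat_range_def by force
  show "mat_range B \<subseteq> mat_range (B * Q)"
  proof
    fix v assume "v \<in> mat_range B"
    then obtain x where x: "x \<in> carrier_vec k" and v: "v = B *\<^sub>v x"
      using B unfolding mat_range_def by auto
    have "v = B * Q *\<^sub>v (Q' *\<^sub>v x)"
      using B Q Q' QQ' x by (simp add: v assoc_mult_mat_vec[symmetric, of _ k k _ k])
    then show "v \<in> mat_range (B * Q)"
      using B Q Q' x unfolding mat_range_def by fastforce
  qed
qed

lemma mat_range_svd:
  assumes "is_svd Ph U L V"
  shows "mat_range (V * transpose_mat L) = mat_range (transpose_mat Ph)"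
proof -
  define d M where "d = dim_row Ph" and "M = dim_col Ph"
  have U: "U \<in> carrier_mat d d" and L: "L \<in> carrier_mat d M" and V: "V \<in> carrier_mat M M"
    and UU: "transpose_mat U * U = 1\<^sub>m d" and Ph: "Ph = U * L * transpose_mat V"
    using assms unfolding is_svd_def Let_def d_def M_def by blast+
  have "transpose_mat Ph = V * transpose_mat L * transpose_mat U"
    using U L V by (simp add: Ph transpose_mult[of _ d M _ M] transpose_mult[of _ d d _ M]
        assoc_mult_mat[of V M M _ d _ d])
  then show ?thesis
    using mat_range_mult_invertible[of "V * transpose_mat L" M d "transpose_mat U" U] U L V UU
    by simp
qed

lemma mat_range_subset_iff:
  fixes A B :: "real mat"
  assumes A: "A \<in> carrier_mat m k1" and B: "B \<in> carrier_mat m k2"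
  shows "mat_range A \<subseteq> mat_range B \<longleftrightarrow> (\<exists>X\<in>carrier_mat k2 k1. A = B * X)"
proof
  assume "\<exists>X\<in>carrier_mat k2 k1. A = B * X"
  then obtain X where X: "X \<in> carrier_mat k2 k1" and AX: "A = B * X" by blast
  show "mat_range A \<subseteq> mat_range B"
  proof
    fix v assume "v \<in> mat_range A"
    then obtain x where x: "x \<in> carrier_vec k1" and v: "v = A *\<^sub>v x"
      using A unfolding mat_range_def by auto
    have "v = B *\<^sub>v (X *\<^sub>v x)" using B X x by (simp add: v AX)
    then show "v \<in> mat_range B" using B X x unfolding mat_range_def by fastforce
  qed
next
  assume sub: "mat_range A \<subseteq> mat_range B"
  have "\<exists>c\<in>carrier_vec k2. A *\<^sub>v unit_vec k1 j = B *\<^sub>v c" for j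
  proof -
    have "A *\<^sub>v unit_vec k1 j \<in> mat_range A"
      using A unfolding mat_range_def by auto
    then have "A *\<^sub>v unit_vec k1 j \<in> mat_range B" using sub by blast
    then show ?thesis using B unfolding mat_range_def by auto
  qed
  then obtain c where c: "\<And>j. c j \<in> carrier_vec k2" "\<And>j. A *\<^sub>v unit_vec k1 j = B *\<^sub>v c j"
    by metis
  define X where "X = mat k2 k1 (\<lambda>(l, j). c j $ l)"
  have "A = B * X"
  proof (rule eq_matI)
    fix i j assume "i < dim_row (B * X)" "j < dim_col (B * X)"
    then have i: "i < m" and j: "j < k1" using B by (auto simp: X_def)
    have "col X j = c j" using c(1)[of j] j by (auto simp: X_def intro!: eq_vecI)
    then have "(B * X) $$ (i, j) = (B *\<^sub>v c j) $ i" using B i j by (simp add: X_def)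
    also have "\<dots> = A $$ (i, j)" using A i j by (simp flip: c(2))
    finally show "A $$ (i, j) = (B * X) $$ (i, j)" by simp
  qed (use A B in \<open>auto simp: X_def\<close>)
  then show "\<exists>X\<in>carrier_mat k2 k1. A = B * X" by (auto simp: X_def)
qed

definition factors_linearly :: "'t set \<Rightarrow> nat \<Rightarrow> nat \<Rightarrow> ('t \<Rightarrow> nat \<Rightarrow> real) \<Rightarrow> ('t \<Rightarrow> nat \<Rightarrow> real) \<Rightarrow> bool"
  where "factors_linearly S d1 d2 f g \<longleftrightarrow>
    (\<exists>C\<in>carrier_mat d1 d2. \<forall>t\<in>S. \<forall>i<d1. f t i = (\<Sum>l\<in>{0..<d2}. C $$ (i, l) * g t l))"

lemma mat_range_transpose_cols_subset_iff:
  fixes f g :: "'t \<Rightarrow> nat \<Rightarrow> real"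
  defines "Phi d h ts \<equiv> mat_of_cols d (map (\<lambda>t. Matrix.vec d (h t)) ts)"
  shows "mat_range (transpose_mat (Phi d1 f ts)) \<subseteq> mat_range (transpose_mat (Phi d2 g ts))
     \<longleftrightarrow> factors_linearly (set ts) d1 d2 f g"
proof -
  have entry: "transpose_mat (Phi d h ts) $$ (m, i) = h (ts ! m) i"
    if "m < length ts" "i < d" for d h m i
    using that by (simp add: Phi_def mat_of_cols_index)
  have "(\<exists>X\<in>carrier_mat d2 d1. transpose_mat (Phi d1 f ts) = transpose_mat (Phi d2 g ts) * X)
    \<longleftrightarrow> (\<exists>C\<in>carrier_mat d1 d2. transpose_mat (Phi d1 f ts) = transpose_mat (Phi d2 g ts) * transpose_mat C)"
    by (metis transpose_carrier_mat transpose_transpose)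
  also have "\<dots> \<longleftrightarrow> factors_linearly (set ts) d1 d2 f g"
    unfolding factors_linearly_def
  proof (intro bex_cong refl)
    fix C :: "real mat" assume C: "C \<in> carrier_mat d1 d2"
    have "(transpose_mat (Phi d2 g ts) * transpose_mat C) $$ (m, i)
        = (\<Sum>l\<in>{0..<d2}. C $$ (i, l) * g (ts ! m) l)" if "m < length ts" "i < d1" for m i
      using that C by (auto simp: entry scalar_prod_def Phi_def mult.commute intro!: sum.cong)
    then show "transpose_mat (Phi d1 f ts) = transpose_mat (Phi d2 g ts) * transpose_mat C
      \<longleftrightarrow> (\<forall>t\<in>set ts. \<forall>i<d1. f t i = (\<Sum>l\<in>{0..<d2}. C $$ (i, l) * g t l))"
      using C by (auto simp: mat_eq_iff all_set_conv_all_nth Phi_def mat_of_cols_index)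
  qed
  finally show ?thesis
    by (subst mat_range_subset_iff) (auto simp: Phi_def)
qed

section \<open>A Gram matrix and a sub-Gram matrix supported on the leading coordinates\<close>

definition gram_mat :: "nat \<Rightarrow> 't set \<Rightarrow> ('t \<Rightarrow> nat \<Rightarrow> real) \<Rightarrow> real mat" where
  "gram_mat m T w = mat m m (\<lambda>(a, b). \<Sum>t\<in>T. w t a * w t b)"

definition wdot :: "('t \<Rightarrow> nat \<Rightarrow> real) \<Rightarrow> 't \<Rightarrow> real Matrix.vec \<Rightarrow> real" where
  "wdot w t v = (\<Sum>b\<in>{0..<dim_vec v}. w t b * v $ b)"

definition zero_pad :: "nat \<Rightarrow> real Matrix.vec \<Rightarrow> real Matrix.vec" where
  "zero_pad n x = Matrix.vec n (\<lambda>i. if i < dim_vec x then x $ i else 0)"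

lemma sum_mult_wdot_swap:
  "(\<Sum>i\<in>{0..<dim_vec v}. (\<Sum>t\<in>T. w t i * a t) * v $ i) = (\<Sum>t\<in>T. a t * wdot w t v)"
  unfolding wdot_def sum_distrib_right sum_distrib_left by (subst sum.swap) (simp add: mult_ac)

lemma gram_mat_carrier [simp]: "gram_mat m T w \<in> carrier_mat m m"
  and dim_gram_mat [simp]: "dim_row (gram_mat m T w) = m" "dim_col (gram_mat m T w) = m"
  by (simp_all add: gram_mat_def)

lemma transpose_gram_mat: "transpose_mat (gram_mat m T w) = gram_mat m T w"
  by (intro eq_matI) (auto simp: gram_mat_def mult.commute)

lemma gram_mat_mult_vec:
  assumes "v \<in> carrier_vec m" "i < m"
  shows "(gram_mat m T w *\<^sub>v v) $ i = (\<Sum>t\<in>T. w t i * wdot w t v)"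
proof -
  have "(gram_mat m T w *\<^sub>v v) $ i = (\<Sum>b\<in>{0..<m}. \<Sum>t\<in>T. w t i * w t b * v $ b)"
    using assms by (simp add: gram_mat_def scalar_prod_def sum_distrib_left sum_distrib_right mult_ac)
  also have "\<dots> = (\<Sum>t\<in>T. \<Sum>b\<in>{0..<m}. w t i * w t b * v $ b)"
    by (rule sum.swap)
  finally show ?thesis
    using assms by (simp add: wdot_def sum_distrib_left mult_ac)
qed

lemma sum_wdot_gram_mat_inv:
  assumes inv: "invertible_mat (gram_mat m T w)" and x: "x \<in> carrier_vec m" and i: "i < m"
  shows "(\<Sum>t\<in>T. w t i * wdot w t (mat_inv (gram_mat m T w) *\<^sub>v x)) = x $ i"
proof -
  have "mat_inv (gram_mat m T w) *\<^sub>v x \<in> carrier_vec m"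
    using mat_inv_carrier[OF inv gram_mat_carrier] x by simp
  then have "(\<Sum>t\<in>T. w t i * wdot w t (mat_inv (gram_mat m T w) *\<^sub>v x))
      = (gram_mat m T w *\<^sub>v (mat_inv (gram_mat m T w) *\<^sub>v x)) $ i"
    by (rule gram_mat_mult_vec[OF _ i, symmetric])
  also have "\<dots> = x $ i"
    by (simp only: mult_vec_mat_inv[OF inv gram_mat_carrier x])
  finally show ?thesis .
qed

lemma lead_submat_mult_vec:
  assumes x: "x \<in> carrier_vec d" and "d \<le> n" and M: "M \<in> carrier_mat n n" and i: "i < d"
  shows "(lead_submat d M *\<^sub>v x) $ i = (M *\<^sub>v zero_pad n x) $ i"
proof -
  have "(M *\<^sub>v zero_pad n x) $ i = (\<Sum>j\<in>{0..<n}. M $$ (i, j) * (if j < d then x $ j else 0))"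
    using assms by (simp add: zero_pad_def scalar_prod_def)
  also have "\<dots> = (\<Sum>j\<in>{0..<d}. M $$ (i, j) * x $ j)"
    using \<open>d \<le> n\<close> by (intro sum.mono_neutral_cong_right) auto
  finally show ?thesis
    using x i by (simp add: lead_submat_def scalar_prod_def)
qed

locale partial_gram =
  fixes n d :: nat and T T0 :: "'t set" and w :: "'t \<Rightarrow> nat \<Rightarrow> real"
  assumes finite_T: "finite T" and T0_subset: "T0 \<subseteq> T" and d_le_n: "d \<le> n"
    and T0_support: "\<And>t b. t \<in> T0 \<Longrightarrow> d \<le> b \<Longrightarrow> b < n \<Longrightarrow> w t b = 0"
    and invertible_J: "invertible_mat (gram_mat n T w)"
    and invertible_J0: "invertible_mat (gram_mat d T0 w)"
begin

abbreviation "J \<equiv> gram_mat n T w"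
abbreviation "J0 \<equiv> gram_mat d T0 w"
abbreviation "L \<equiv> lead_submat d (mat_inv J)"

lemmas J_inv_carrier = mat_inv_carrier[OF invertible_J gram_mat_carrier]
lemmas J0_inv_carrier = mat_inv_carrier[OF invertible_J0 gram_mat_carrier]

lemma L_carrier: "L \<in> carrier_mat d d"
  by (simp add: lead_submat_def)

lemma transpose_L: "transpose_mat L = L"
  using transpose_mat_inv[OF invertible_J gram_mat_carrier transpose_gram_mat] J_inv_carrier d_le_n
  by (intro eq_matI) (auto simp: lead_submat_def mat_eq_iff)

lemma wdot_T0:
  assumes "t \<in> T0" "v \<in> carrier_vec n"
  shows "wdot w t v = (\<Sum>b\<in>{0..<d}. w t b * v $ b)"
  using assms T0_support d_le_n unfolding wdot_def
  by (intro sum.mono_neutral_right) auto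

lemma lead_submat_inv_mult_vec:
  assumes "x \<in> carrier_vec d" "i < d"
  shows "(L *\<^sub>v x) $ i = (mat_inv J *\<^sub>v zero_pad n x) $ i"
  using lead_submat_mult_vec[OF assms(1) d_le_n J_inv_carrier assms(2)] .

lemma quadratic_form_lead_submat_inv:
  assumes x: "x \<in> carrier_vec d"
  defines "y \<equiv> mat_inv J *\<^sub>v zero_pad n x"
  shows "x \<bullet> (L *\<^sub>v x) = (\<Sum>t\<in>T. (wdot w t y)\<^sup>2)"
    and "x \<bullet> (L *\<^sub>v x) = (\<Sum>t\<in>T0. wdot w t (mat_inv J0 *\<^sub>v x) * wdot w t y)"
proof -
  have pad: "zero_pad n x \<in> carrier_vec n" by (simp add: zero_pad_def)
  then have y: "y \<in> carrier_vec n" using J_inv_carrier by (simp add: y_def)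
  have normal_eq: "(\<Sum>t\<in>T. w t i * wdot w t y) = zero_pad n x $ i" if "i < n" for i
    using sum_wdot_gram_mat_inv[OF invertible_J pad] that unfolding y_def by (simp add: zero_pad_def)
  have xLx: "x \<bullet> (L *\<^sub>v x) = (\<Sum>i\<in>{0..<d}. x $ i * y $ i)"
    using lead_submat_inv_mult_vec[OF x] L_carrier by (simp add: scalar_prod_def y_def)
  also have "\<dots> = (\<Sum>i\<in>{0..<n}. zero_pad n x $ i * y $ i)"
    using d_le_n x by (intro sum.mono_neutral_cong_left) (auto simp: zero_pad_def)
  also have "\<dots> = (\<Sum>i\<in>{0..<dim_vec y}. (\<Sum>t\<in>T. w t i * wdot w t y) * y $ i)"
    using y by (simp add: normal_eq)
  also have "\<dots> = (\<Sum>t\<in>T. (wdot w t y)\<^sup>2)"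
    by (simp add: sum_mult_wdot_swap power2_eq_square)
  finally show "x \<bullet> (L *\<^sub>v x) = (\<Sum>t\<in>T. (wdot w t y)\<^sup>2)" .
  have "(\<Sum>i\<in>{0..<d}. x $ i * y $ i)
      = (\<Sum>i\<in>{0..<d}. (\<Sum>t\<in>T0. w t i * wdot w t (mat_inv J0 *\<^sub>v x)) * y $ i)"
    using sum_wdot_gram_mat_inv[OF invertible_J0 x] by simp
  also have "\<dots> = (\<Sum>t\<in>T0. wdot w t (mat_inv J0 *\<^sub>v x) * wdot w t y)"
    unfolding sum_distrib_right sum_distrib_left
    by (subst sum.swap) (simp add: wdot_T0[OF _ y] sum_distrib_left mult_ac)
  finally show "x \<bullet> (L *\<^sub>v x) = (\<Sum>t\<in>T0. wdot w t (mat_inv J0 *\<^sub>v x) * wdot w t y)"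
    using xLx by simp
qed

lemma quadratic_form_J0_inv:
  assumes x: "x \<in> carrier_vec d"
  shows "x \<bullet> (mat_inv J0 *\<^sub>v x) = (\<Sum>t\<in>T0. (wdot w t (mat_inv J0 *\<^sub>v x))\<^sup>2)"
proof -
  define z where "z = mat_inv J0 *\<^sub>v x"
  have z: "z \<in> carrier_vec d" using J0_inv_carrier x by (simp add: z_def)
  have normal_eq: "(\<Sum>t\<in>T0. w t i * wdot w t z) = x $ i" if "i < d" for i
    using sum_wdot_gram_mat_inv[OF invertible_J0 x that] unfolding z_def .
  have "x \<bullet> z = (\<Sum>i\<in>{0..<dim_vec z}. (\<Sum>t\<in>T0. w t i * wdot w t z) * z $ i)"
    using x z by (simp add: scalar_prod_def normal_eq)
  also have "\<dots> = (\<Sum>t\<in>T0. (wdot w t z)\<^sup>2)"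
    by (simp add: sum_mult_wdot_swap power2_eq_square)
  finally show ?thesis by (simp add: z_def)
qed

lemma quadratic_form_gap:
  assumes x: "x \<in> carrier_vec d"
  defines "y \<equiv> mat_inv J *\<^sub>v zero_pad n x" and "z \<equiv> mat_inv J0 *\<^sub>v x"
  shows "x \<bullet> ((mat_inv J0 - L) *\<^sub>v x)
     = (\<Sum>t\<in>T0. (wdot w t z - wdot w t y)\<^sup>2) + (\<Sum>t\<in>T-T0. (wdot w t y)\<^sup>2)"
proof -
  have "x \<bullet> ((mat_inv J0 - L) *\<^sub>v x) = x \<bullet> (mat_inv J0 *\<^sub>v x) - x \<bullet> (L *\<^sub>v x)"
    using J0_inv_carrier L_carrier x
    by (simp add: minus_mult_distrib_mat_vec scalar_prod_minus_distrib[of _ d])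
  moreover have "(\<Sum>t\<in>T. (wdot w t y)\<^sup>2) = (\<Sum>t\<in>T0. (wdot w t y)\<^sup>2) + (\<Sum>t\<in>T-T0. (wdot w t y)\<^sup>2)"
    using sum.subset_diff[OF T0_subset finite_T] by (simp add: add.commute)
  moreover have "(\<Sum>t\<in>T0. (wdot w t z - wdot w t y)\<^sup>2)
      = (\<Sum>t\<in>T0. (wdot w t z)\<^sup>2) - 2 * (\<Sum>t\<in>T0. wdot w t z * wdot w t y) + (\<Sum>t\<in>T0. (wdot w t y)\<^sup>2)"
    by (simp add: power2_diff sum.distrib sum_subtractf sum_distrib_left mult_ac)
  ultimately show ?thesis
    using quadratic_form_lead_submat_inv[OF x] quadratic_form_J0_inv[OF x]
    unfolding y_def z_def by linarith
qed

lemma loewner_le_lead_submat_inv: "loewner_le L (mat_inv J0)"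
  unfolding loewner_le_def
proof (intro exI[of _ d] conjI ballI)
  fix x :: "real Matrix.vec" assume "x \<in> carrier_vec d"
  then show "0 \<le> x \<bullet> ((mat_inv J0 - L) *\<^sub>v x)"
    by (simp add: quadratic_form_gap sum_nonneg)
qed (use L_carrier transpose_L J0_inv_carrier
      transpose_mat_inv[OF invertible_J0 gram_mat_carrier transpose_gram_mat] in auto)

end

context partial_gram
begin

lemma lead_submat_inv_eq_imp_orthogonal:
  assumes eq: "L = mat_inv J0" and x: "x \<in> carrier_vec d" and t: "t \<in> T - T0"
  shows "wdot w t (mat_inv J *\<^sub>v zero_pad n x) = 0"
proof -
  let ?y = "mat_inv J *\<^sub>v zero_pad n x" and ?z = "mat_inv J0 *\<^sub>v x"
  have "x \<bullet> ((mat_inv J0 - L) *\<^sub>v x) = 0"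
    using eq x J0_inv_carrier by simp
  then have "(\<Sum>t\<in>T0. (wdot w t ?z - wdot w t ?y)\<^sup>2) + (\<Sum>t\<in>T-T0. (wdot w t ?y)\<^sup>2) = 0"
    by (simp only: quadratic_form_gap[OF x])
  moreover have "0 \<le> (\<Sum>t\<in>T0. (wdot w t ?z - wdot w t ?y)\<^sup>2)" "0 \<le> (\<Sum>t\<in>T-T0. (wdot w t ?y)\<^sup>2)"
    by (simp_all add: sum_nonneg)
  ultimately have "(\<Sum>t\<in>T-T0. (wdot w t ?y)\<^sup>2) = 0" by linarith
  then show ?thesis
    using finite_T t sum_nonneg_eq_0_iff[of "T - T0" "\<lambda>t. (wdot w t ?y)\<^sup>2"] by simp
qed

lemma mat_inv_J_mult_zero_pad:
  assumes x: "x \<in> carrier_vec d" and y: "y \<in> carrier_vec n"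
    and y_head: "\<And>b. b < d \<Longrightarrow> y $ b = (mat_inv J0 *\<^sub>v x) $ b"
    and y_orth: "\<And>t. t \<in> T - T0 \<Longrightarrow> wdot w t y = 0"
  shows "mat_inv J *\<^sub>v zero_pad n x = y"
proof (rule mat_inv_mult_vec_eq[OF invertible_J gram_mat_carrier y], rule eq_vecI)
  define z where "z = mat_inv J0 *\<^sub>v x"
  have z: "z \<in> carrier_vec d" using J0_inv_carrier x by (simp add: z_def)
  fix a assume "a < dim_vec (zero_pad n x)"
  then have a: "a < n" by (simp add: zero_pad_def)
  have y_z: "y $ b = z $ b" if "b < d" for b
    unfolding z_def by (rule y_head[OF that])
  have y_T0: "wdot w t y = wdot w t z" if "t \<in> T0" for t
    using wdot_T0[OF that y] z by (simp add: wdot_def y_z)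
  have "(J *\<^sub>v y) $ a = (\<Sum>t\<in>T. w t a * wdot w t y)"
    by (rule gram_mat_mult_vec[OF y a])
  also have "\<dots> = (\<Sum>t\<in>T0. w t a * wdot w t z)"
    using T0_subset finite_T y_orth y_T0 by (intro sum.mono_neutral_cong_right) auto
  also have "\<dots> = zero_pad n x $ a"
  proof (cases "a < d")
    case True
    then show ?thesis
      using sum_wdot_gram_mat_inv[OF invertible_J0 x True] x a by (simp add: z_def zero_pad_def)
  qed (use a x T0_support in \<open>simp add: zero_pad_def\<close>)
  finally show "(J *\<^sub>v y) $ a = zero_pad n x $ a" .
qed (simp add: zero_pad_def)

end

locale partial_gram_blocks = partial_gram n d T T0 w for n d T T0 and w :: "'t \<Rightarrow> nat \<Rightarrow> real" +
  fixes P :: nat and Tp :: "nat \<Rightarrow> 't set" and off Dp :: "nat \<Rightarrow> nat"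
  assumes attacked_cover: "T - T0 \<subseteq> (\<Union>p\<in>{1..P}. Tp p)"
    and Tp_subset: "\<And>p. p \<in> {1..P} \<Longrightarrow> Tp p \<subseteq> T - T0"
    and block_bounds: "\<And>p. p \<in> {1..P} \<Longrightarrow> d \<le> off p \<and> off p + Dp p \<le> n"
    and blocks_disjoint: "\<And>p q. p \<in> {1..P} \<Longrightarrow> q \<in> {1..P} \<Longrightarrow> p \<noteq> q \<Longrightarrow>
       {off p..<off p + Dp p} \<inter> {off q..<off q + Dp q} = {}"
    and Tp_support: "\<And>p t b. p \<in> {1..P} \<Longrightarrow> t \<in> Tp p \<Longrightarrow> d \<le> b \<Longrightarrow> b < n \<Longrightarrow>
       b \<notin> {off p..<off p + Dp p} \<Longrightarrow> w t b = 0"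
begin

lemma wdot_Tp:
  assumes p: "p \<in> {1..P}" and t: "t \<in> Tp p" and v: "v \<in> carrier_vec n"
  shows "wdot w t v
       = (\<Sum>b\<in>{0..<d}. w t b * v $ b) + (\<Sum>l\<in>{0..<Dp p}. w t (off p + l) * v $ (off p + l))"
proof -
  have "wdot w t v = (\<Sum>b\<in>{0..<d} \<union> {off p..<off p + Dp p}. w t b * v $ b)"
    using block_bounds[OF p] Tp_support[OF p t] v unfolding wdot_def
    by (intro sum.mono_neutral_right) auto
  also have "\<dots> = (\<Sum>b\<in>{0..<d}. w t b * v $ b) + (\<Sum>b\<in>{off p..<off p + Dp p}. w t b * v $ b)"
    using block_bounds[OF p] by (intro sum.union_disjoint) auto
  also have "(\<Sum>b\<in>{off p..<off p + Dp p}. w t b * v $ b) = (\<Sum>l\<in>{0..<Dp p}. w t (off p + l) * v $ (off p + l))"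
    using sum.shift_bounds_nat_ivl[of "\<lambda>b. w t b * v $ b" 0 "off p" "Dp p"] by (simp add: add.commute)
  finally show ?thesis .
qed

lemma lead_submat_inv_eq_imp_factors:
  assumes eq: "L = mat_inv J0" and p: "p \<in> {1..P}"
  shows "factors_linearly (Tp p) d (Dp p) w (\<lambda>t l. w t (off p + l))"
proof -
  define x where "x i = J0 *\<^sub>v unit_vec d i" for i
  define y where "y i = mat_inv J *\<^sub>v zero_pad n (x i)" for i
  have x: "x i \<in> carrier_vec d" for i
    unfolding x_def by (rule mult_mat_vec_carrier[OF gram_mat_carrier unit_vec_carrier])
  have y: "y i \<in> carrier_vec n" for i
    using J_inv_carrier by (simp add: y_def zero_pad_def)
  have y_head: "y i $ b = unit_vec d i $ b" if "b < d" for i b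
  proof -
    have "mat_inv J0 *\<^sub>v x i = unit_vec d i"
      unfolding x_def by (rule mat_inv_mult_vec_eq[OF invertible_J0 gram_mat_carrier unit_vec_carrier refl])
    then show ?thesis
      using lead_submat_inv_mult_vec[OF x that, of i] unfolding eq y_def by simp
  qed
  show ?thesis
    unfolding factors_linearly_def
  proof (intro bexI[of _ "mat d (Dp p) (\<lambda>(i, l). - y i $ (off p + l))"] ballI allI impI)
    fix t i assume t: "t \<in> Tp p" and i: "i < d"
    have "0 = wdot w t (y i)"
      using lead_submat_inv_eq_imp_orthogonal[OF eq x] Tp_subset[OF p] t unfolding y_def by (metis subsetD)
    also have "\<dots> = w t i + (\<Sum>l\<in>{0..<Dp p}. w t (off p + l) * y i $ (off p + l))"
    proof -
      have "(\<Sum>b\<in>{0..<d}. w t b * y i $ b) = (\<Sum>b\<in>{0..<d}. if b = i then w t b else 0)"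
        using y_head i by (intro sum.cong) auto
      then show ?thesis
        using wdot_Tp[OF p t y] i by simp
    qed
    finally have "w t i = - (\<Sum>l\<in>{0..<Dp p}. w t (off p + l) * y i $ (off p + l))"
      by linarith
    also have "\<dots> = (\<Sum>l\<in>{0..<Dp p}. mat d (Dp p) (\<lambda>(i, l). - y i $ (off p + l)) $$ (i, l) * w t (off p + l))"
      using i by (simp add: sum_negf[symmetric] mult.commute)
    finally show "w t i = (\<Sum>l\<in>{0..<Dp p}. mat d (Dp p) (\<lambda>(i, l). - y i $ (off p + l)) $$ (i, l) * w t (off p + l))" .
  qed simp
qed

end

context partial_gram_blocks
begin

lemma obtain_extension_orthogonal_to_attacked:
  assumes factors: "\<forall>p\<in>{1..P}. factors_linearly (Tp p) d (Dp p) w (\<lambda>t l. w t (off p + l))"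
    and z: "z \<in> carrier_vec d"
  obtains y where "y \<in> carrier_vec n" "\<And>b. b < d \<Longrightarrow> y $ b = z $ b"
    "\<And>t. t \<in> T - T0 \<Longrightarrow> wdot w t y = 0"
proof -
  obtain C where C_factor: "\<And>p t i. p \<in> {1..P} \<Longrightarrow> t \<in> Tp p \<Longrightarrow> i < d \<Longrightarrow>
      w t i = (\<Sum>l\<in>{0..<Dp p}. C p $$ (i, l) * w t (off p + l))"
    using factors unfolding factors_linearly_def by metis
  define v where "v q l = - (\<Sum>i\<in>{0..<d}. C q $$ (i, l) * z $ i)" for q l
  define y where "y = Matrix.vec n (\<lambda>b. if b < d then z $ b
    else \<Sum>q\<in>{1..P}. if b \<in> {off q..<off q + Dp q} then v q (b - off q) else 0)"
  have y_block: "y $ (off p + l) = v p l" if p: "p \<in> {1..P}" and l: "l < Dp p" for p l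
  proof -
    have in_block: "(off p + l \<in> {off q..<off q + Dp q}) = (q = p)" if q: "q \<in> {1..P}" for q
      using blocks_disjoint[OF p q] l by (cases "q = p") auto
    have "(\<Sum>q\<in>{1..P}. if off p + l \<in> {off q..<off q + Dp q} then v q (off p + l - off q) else 0)
        = (\<Sum>q\<in>{1..P}. if q = p then v q (off p + l - off q) else 0)"
      by (intro sum.cong refl) (simp only: in_block)
    also have "\<dots> = v p l" using p by simp
    finally show ?thesis using block_bounds[OF p] l by (simp add: y_def)
  qed
  show thesis
  proof (rule that)
    show y: "y \<in> carrier_vec n" by (simp add: y_def)
    show y_head: "y $ b = z $ b" if "b < d" for b using that d_le_n by (simp add: y_def)
    fix t assume "t \<in> T - T0"
    then obtain p where p: "p \<in> {1..P}" and t: "t \<in> Tp p" using attacked_cover by blast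
    have "(\<Sum>l\<in>{0..<Dp p}. w t (off p + l) * y $ (off p + l))
        = - (\<Sum>l\<in>{0..<Dp p}. \<Sum>i\<in>{0..<d}. C p $$ (i, l) * w t (off p + l) * z $ i)"
      by (simp add: y_block[OF p] v_def sum_negf sum_distrib_left mult_ac)
    also have "\<dots> = - (\<Sum>i\<in>{0..<d}. (\<Sum>l\<in>{0..<Dp p}. C p $$ (i, l) * w t (off p + l)) * z $ i)"
      by (simp add: sum.swap[of _ "{0..<Dp p}"] sum_distrib_right)
    also have "\<dots> = - (\<Sum>i\<in>{0..<d}. w t i * z $ i)"
      using C_factor[OF p t] by simp
    finally show "wdot w t y = 0"
      by (simp add: wdot_Tp[OF p t y] y_head)
  qed
qed

lemma factors_imp_lead_submat_inv_eq:
  assumes factors: "\<forall>p\<in>{1..P}. factors_linearly (Tp p) d (Dp p) w (\<lambda>t l. w t (off p + l))"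
  shows "L = mat_inv J0"
proof (rule eq_mat_on_vecI[OF L_carrier J0_inv_carrier])
  fix x :: "real Matrix.vec" assume x: "x \<in> carrier_vec d"
  have "mat_inv J0 *\<^sub>v x \<in> carrier_vec d"
    using J0_inv_carrier x by simp
  then obtain y where y: "y \<in> carrier_vec n" and y_head: "\<And>b. b < d \<Longrightarrow> y $ b = (mat_inv J0 *\<^sub>v x) $ b"
    and y_orth: "\<And>t. t \<in> T - T0 \<Longrightarrow> wdot w t y = 0"
    using obtain_extension_orthogonal_to_attacked[OF factors] by metis
  have "mat_inv J *\<^sub>v zero_pad n x = y"
    by (rule mat_inv_J_mult_zero_pad[OF x y y_head y_orth])
  then show "L *\<^sub>v x = mat_inv J0 *\<^sub>v x"
    using lead_submat_inv_mult_vec[OF x] y_head L_carrier J0_inv_carrier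
    by (intro eq_vecI) auto
qed

lemma lead_submat_inv_eq_iff:
  "L = mat_inv J0 \<longleftrightarrow> (\<forall>p\<in>{1..P}. factors_linearly (Tp p) d (Dp p) w (\<lambda>t l. w t (off p + l)))"
  using lead_submat_inv_eq_imp_factors factors_imp_lead_submat_inv_eq by blast

end

section \<open>The quantized sensor network\<close>

definition triple_set :: "nat set \<Rightarrow> (nat \<Rightarrow> nat) \<Rightarrow> (nat \<Rightarrow> nat) \<Rightarrow> (nat \<times> nat \<times> nat) set" where
  "triple_set S K R = (SIGMA j:S. SIGMA k:{1..K j}. {1..R j})"

lemma finite_triple_set: "finite S \<Longrightarrow> finite (triple_set S K R)"
  unfolding triple_set_def by (intro finite_SigmaI) auto

lemma triple_set_mono: "S \<subseteq> S' \<Longrightarrow> triple_set S K R \<subseteq> triple_set S' K R"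
  unfolding triple_set_def by auto

lemma set_triples: "finite S \<Longrightarrow> set (triples S K R) = triple_set S K R"
  unfolding triples_def triple_set_def
  by (simp del: upt_Suc add: atLeastLessThanSuc_atLeastAtMost set_concat image_image) blast

lemma sum_triple_set:
  fixes F :: "nat \<Rightarrow> nat \<Rightarrow> nat \<Rightarrow> real"
  assumes "finite S"
  shows "(\<Sum>j\<in>S. \<Sum>k\<in>{1..K j}. \<Sum>r\<in>{1..R j}. F j k r) = (\<Sum>(j, k, r)\<in>triple_set S K R. F j k r)"
  using assms unfolding triple_set_def
  by (simp add: sum.Sigma split_def)

definition score_weight :: "nat \<Rightarrow> (nat \<Rightarrow> nat \<Rightarrow> nat \<Rightarrow> real Matrix.vec \<Rightarrow> real) \<Rightarrow> real Matrix.vec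
    \<Rightarrow> nat \<times> nat \<times> nat \<Rightarrow> nat \<Rightarrow> real" where
  "score_weight n Pr Th = (\<lambda>(j, k, r) b. grad n (Pr j k r) Th $ b / sqrt (Pr j k r Th))"

lemma fisher_block_eq_gram_mat:
  assumes "finite S" and pos: "\<And>j k r. (j, k, r) \<in> triple_set S K R \<Longrightarrow> 0 < Pr j k r Th"
  shows "fisher_block n off m Pr S K R Th
       = gram_mat m (triple_set S K R) (\<lambda>t a. score_weight n Pr Th t (off + a))"
proof -
  have entry: "(\<Sum>j\<in>S. \<Sum>k\<in>{1..K j}. \<Sum>r\<in>{1..R j}.
        grad n (Pr j k r) Th $ (off + a) * grad n (Pr j k r) Th $ (off + b) / Pr j k r Th)
      = (\<Sum>t\<in>triple_set S K R. score_weight n Pr Th t (off + a) * score_weight n Pr Th t (off + b))"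
    for a b
    unfolding sum_triple_set[OF \<open>finite S\<close>]
  proof (intro sum.cong refl)
    fix t assume t: "t \<in> triple_set S K R"
    obtain j k r where [simp]: "t = (j, k, r)" by (cases t)
    show "(case t of (j, k, r) \<Rightarrow>
          grad n (Pr j k r) Th $ (off + a) * grad n (Pr j k r) Th $ (off + b) / Pr j k r Th)
        = score_weight n Pr Th t (off + a) * score_weight n Pr Th t (off + b)"
      using pos t by (simp add: score_weight_def abs_of_pos)
  qed
  show ?thesis
    unfolding fisher_block_def gram_mat_def
    by (intro arg_cong[where f = "mat m m"] ext) (simp only: entry split: prod.splits)
qed

lemma Phi_mat_eq_mat_of_cols:
  "Phi_mat n off m Pr S K R Th
     = mat_of_cols m (map (\<lambda>t. Matrix.vec m (\<lambda>a. score_weight n Pr Th t (off + a))) (triples S K R))"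
  unfolding Phi_mat_def score_weight_def by (simp add: split_def)

lemma svd_range_subset_iff_factors_linearly:
  assumes "finite S"
    and "is_svd (Phi_mat n 0 d Pr S K R Th) U1 L1 V1"
    and "is_svd (Phi_mat n off m Pr S K R Th) U2 L2 V2"
  shows "mat_range (V1 * transpose_mat L1) \<subseteq> mat_range (V2 * transpose_mat L2)
     \<longleftrightarrow> factors_linearly (triple_set S K R) d m (score_weight n Pr Th) (\<lambda>t l. score_weight n Pr Th t (off + l))"
  using assms mat_range_transpose_cols_subset_iff[of d "score_weight n Pr Th" "triples S K R" m]
  by (simp add: mat_range_svd Phi_mat_eq_mat_of_cols set_triples)

lemma grad_component_eq_0:
  assumes "differentiable_vec n F x" and i: "i < n"
    and const: "\<And>s. F (x + s \<cdot>\<^sub>v unit_vec n i) = F x"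
  shows "grad n F x $ i = 0"
proof (rule ccontr)
  let ?g = "grad n F x"
  assume ne: "?g $ i \<noteq> 0"
  have "has_grad n F ?g x"
    using assms(1) unfolding differentiable_vec_def grad_def by (rule someI_ex)
  then have g: "?g \<in> carrier_vec n" and "\<forall>e>0. \<exists>d>0. \<forall>h\<in>carrier_vec n. vnorm h < d \<longrightarrow>
      \<bar>F (x + h) - F x - ?g \<bullet> h\<bar> \<le> e * vnorm h"
    unfolding has_grad_def by blast+
  then obtain d where d: "d > 0" and approx: "\<forall>h\<in>carrier_vec n. vnorm h < d \<longrightarrow>
      \<bar>F (x + h) - F x - ?g \<bullet> h\<bar> \<le> \<bar>?g $ i\<bar> / 2 * vnorm h"
    using ne by (meson half_gt_zero zero_less_abs_iff)
  define h where "h = (d / 2) \<cdot>\<^sub>v unit_vec n i"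
  have h: "h \<in> carrier_vec n" by (simp add: h_def)
  have norm_h: "vnorm h = d / 2"
    using i d by (simp add: h_def vnorm_def power2_eq_square[symmetric])
  have gh: "?g \<bullet> h = d / 2 * ?g $ i" using i g by (simp add: h_def)
  have "\<bar>F (x + h) - F x - ?g \<bullet> h\<bar> = d / 2 * \<bar>?g $ i\<bar>"
    using const[of "d / 2", folded h_def] d by (simp add: gh abs_mult)
  moreover have "\<bar>F (x + h) - F x - ?g \<bullet> h\<bar> \<le> \<bar>?g $ i\<bar> / 2 * vnorm h"
    using approx h norm_h d by simp
  ultimately have "d / 2 * \<bar>?g $ i\<bar> \<le> d / 2 * (\<bar>?g $ i\<bar> / 2)"
    unfolding norm_h by (simp only: mult.commute)
  then have "\<bar>?g $ i\<bar> \<le> \<bar>?g $ i\<bar> / 2" using d by (simp only: mult_le_cancel_left_pos half_gt_zero)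
  then show False using ne by simp
qed

lemma par_off_ge: "Dth \<le> par_off Dth D p"
  unfolding par_off_def by simp

lemma par_off_add:
  assumes "1 \<le> p"
  shows "par_off Dth D p + D p = Dth + (\<Sum>q\<in>{1..p}. D q)"
proof -
  have "{1..p} = insert p {1..<p}" using assms by auto
  then show ?thesis unfolding par_off_def by simp
qed

lemma par_off_add_le_tot_dim: "p \<in> {1..P} \<Longrightarrow> par_off Dth D p + D p \<le> tot_dim Dth D P"
  unfolding tot_dim_def by (simp add: par_off_add sum_mono2)

lemma par_off_add_le:
  assumes "1 \<le> p" "p < q"
  shows "par_off Dth D p + D p \<le> par_off Dth D q"
proof -
  have "(\<Sum>r\<in>{1..p}. D r) \<le> (\<Sum>r\<in>{1..<q}. D r)" using assms by (intro sum_mono2) auto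
  then show ?thesis using par_off_add[OF assms(1)] unfolding par_off_def by simp
qed

lemma par_blocks_disjoint:
  assumes "p \<in> {1..P}" "q \<in> {1..P}" "p \<noteq> q"
  shows "{par_off Dth D p..<par_off Dth D p + D p} \<inter> {par_off Dth D q..<par_off Dth D q + D q} = {}"
  using assms par_off_add_le[of p q Dth D] par_off_add_le[of q p Dth D]
  by (cases "p < q") auto

locale quantized_network =
  fixes N P Dth :: nat and D K R :: "nat \<Rightarrow> nat" and A :: "nat \<Rightarrow> nat set"
    and I :: "nat \<Rightarrow> nat \<Rightarrow> real set"
    and f :: "nat \<Rightarrow> nat \<Rightarrow> real \<Rightarrow> real Matrix.vec \<Rightarrow> real"
    and g :: "nat \<Rightarrow> nat \<Rightarrow> real \<Rightarrow> real Matrix.vec \<Rightarrow> real Matrix.vec \<Rightarrow> real"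
    and Th0 :: "real Matrix.vec"
  assumes sensors_cover: "(\<Union>p\<in>{0..P}. A p) = {1..N}"
    and sensors_disj: "\<forall>p\<le>P. \<forall>q\<le>P. p \<noteq> q \<longrightarrow> A p \<inter> A q = {}"
    and prob_pos_diff: "\<forall>j\<in>{1..N}. \<forall>k\<in>{1..K j}. \<forall>r\<in>{1..R j}. \<forall>Th\<in>carrier_vec (tot_dim Dth D P).
       0 < qprob Dth D A P I f g j k r Th
       \<and> differentiable_vec (tot_dim Dth D P) (qprob Dth D A P I f g j k r) Th"
    and Th0_carrier: "Th0 \<in> carrier_vec (tot_dim Dth D P)"
begin

abbreviation "dim_Theta \<equiv> tot_dim Dth D P"
abbreviation "prob \<equiv> qprob Dth D A P I f g"
abbreviation "w \<equiv> score_weight dim_Theta prob Th0"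
abbreviation "obs p \<equiv> triple_set (A p) K R"
abbreviation "block p \<equiv> {par_off Dth D p..<par_off Dth D p + D p}"

lemma A_subset: "p \<le> P \<Longrightarrow> A p \<subseteq> {1..N}"
  using sensors_cover by auto

lemma finite_A: "p \<le> P \<Longrightarrow> finite (A p)"
  using A_subset finite_subset by blast

lemma sensor_group_eq: "j \<in> A p \<Longrightarrow> p \<le> P \<Longrightarrow> sensor_group A P j = p"
  unfolding sensor_group_def using sensors_disj by (intro the_equality) blast+

lemma prob_shift_invariant:
  assumes j: "j \<in> A p" and p: "p \<le> P" and b: "Dth \<le> b" "b < dim_Theta"
    and b_block: "p \<noteq> 0 \<Longrightarrow> b \<notin> block p"
  shows "prob j k r (Th0 + s \<cdot>\<^sub>v unit_vec dim_Theta b) = prob j k r Th0"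
proof -
  let ?Th = "Th0 + s \<cdot>\<^sub>v unit_vec dim_Theta b"
  have theta: "theta_part Dth ?Th = theta_part Dth Th0"
    using Th0_carrier b by (intro eq_vecI) (auto simp: theta_part_def)
  have tau: "tau_part Dth D p ?Th = tau_part Dth D p Th0" if "j \<notin> A 0"
  proof -
    have "p \<in> {1..P}" using j p that by (cases p) auto
    then have "par_off Dth D p + D p \<le> dim_Theta" by (rule par_off_add_le_tot_dim)
    then show ?thesis
      using Th0_carrier b b_block \<open>p \<in> {1..P}\<close>
      by (intro eq_vecI) (auto simp: tau_part_def)
  qed
  show ?thesis
    using theta tau sensor_group_eq[OF j p] by (simp add: qprob_def)
qed

lemma score_weight_eq_0:
  assumes t: "t \<in> obs p" and p: "p \<le> P" and b: "Dth \<le> b" "b < dim_Theta"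
    and b_block: "p \<noteq> 0 \<Longrightarrow> b \<notin> block p"
  shows "w t b = 0"
proof -
  obtain j k r where t_eq: "t = (j, k, r)" by (cases t)
  have j: "j \<in> A p" and "j \<in> {1..N}" "k \<in> {1..K j}" "r \<in> {1..R j}"
    using t A_subset[OF p] by (auto simp: t_eq triple_set_def)
  then have "differentiable_vec dim_Theta (prob j k r) Th0"
    using prob_pos_diff Th0_carrier by blast
  then have "grad dim_Theta (prob j k r) Th0 $ b = 0"
    using prob_shift_invariant[OF j p b b_block] b by (intro grad_component_eq_0) auto
  then show ?thesis by (simp add: t_eq score_weight_def)
qed

lemma fisher_block_eq:
  assumes "S \<subseteq> {1..N}"
  shows "fisher_block dim_Theta off m prob S K R Th0 = gram_mat m (triple_set S K R) (\<lambda>t a. w t (off + a))"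
  using assms finite_subset[OF assms] prob_pos_diff Th0_carrier
  by (intro fisher_block_eq_gram_mat) (auto simp: triple_set_def)

lemma partial_gram_blocks:
  assumes "invertible_mat (gram_mat dim_Theta (triple_set {1..N} K R) w)"
    and "invertible_mat (gram_mat Dth (obs 0) w)"
  shows "partial_gram_blocks dim_Theta Dth (triple_set {1..N} K R) (obs 0) w P obs (par_off Dth D) D"
proof unfold_locales
  show "obs 0 \<subseteq> triple_set {1..N} K R"
    using A_subset by (simp add: triple_set_mono)
  show "triple_set {1..N} K R - obs 0 \<subseteq> (\<Union>p\<in>{1..P}. obs p)"
  proof
    fix t assume "t \<in> triple_set {1..N} K R - obs 0"
    then obtain j k r where t: "t = (j, k, r)" "j \<in> {1..N}" "j \<notin> A 0" "k \<in> {1..K j}" "r \<in> {1..R j}"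
      by (cases t) (auto simp: triple_set_def)
    then obtain p where "p \<in> {0..P}" "j \<in> A p" using sensors_cover by blast
    with t have "p \<in> {1..P}" "t \<in> obs p" by (cases p; auto simp: triple_set_def)+
    then show "t \<in> (\<Union>p\<in>{1..P}. obs p)" by blast
  qed
  show "obs p \<subseteq> triple_set {1..N} K R - obs 0" if "p \<in> {1..P}" for p
    using that A_subset[of p] sensors_disj by (auto simp: triple_set_def)
  show "w t b = 0" if "t \<in> obs 0" "Dth \<le> b" "b < dim_Theta" for t b
    using that by (intro score_weight_eq_0) auto
  show "w t b = 0" if "p \<in> {1..P}" "t \<in> obs p" "Dth \<le> b" "b < dim_Theta" "b \<notin> block p" for p t b
    using that by (intro score_weight_eq_0) auto
  show "block p \<inter> block q = {}" if "p \<in> {1..P}" "q \<in> {1..P}" "p \<noteq> q" for p q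
    by (rule par_blocks_disjoint[OF that])
qed (use assms par_off_ge par_off_add_le_tot_dim finite_triple_set in \<open>auto simp: tot_dim_def\<close>)

end

theorem theorem2:
  fixes N P Dth :: nat
    and D K R :: "nat \<Rightarrow> nat"
    and A :: "nat \<Rightarrow> nat set"
    and I :: "nat \<Rightarrow> nat \<Rightarrow> real set"
    and f :: "nat \<Rightarrow> nat \<Rightarrow> real \<Rightarrow> real Matrix.vec \<Rightarrow> real"
    and g :: "nat \<Rightarrow> nat \<Rightarrow> real \<Rightarrow> real Matrix.vec \<Rightarrow> real Matrix.vec \<Rightarrow> real"
    and Th0 :: "real Matrix.vec"
    and Uth Lth Vth Utau Ltau Vtau :: "nat \<Rightarrow> real mat"
  defines "n \<equiv> tot_dim Dth D P"
    and "Pr \<equiv> qprob Dth D A P I f g"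
  assumes sensors_cover: "(\<Union>p\<in>{0..P}. A p) = {1..N}"
    and sensors_disj: "\<forall>p\<le>P. \<forall>q\<le>P. p \<noteq> q \<longrightarrow> A p \<inter> A q = {}"
    and quantizer: "\<forall>j\<in>{1..N}. (\<forall>r\<in>{1..R j}. I j r \<in> sets lborel)
                       \<and> disjoint_family_on (I j) {1..R j} \<and> (\<Union>r\<in>{1..R j}. I j r) = UNIV"
    and pdf_f: "\<forall>j\<in>A 0. \<forall>k\<in>{1..K j}. \<forall>th\<in>carrier_vec Dth.
                  (\<forall>x. 0 \<le> f j k x th) \<and> (\<lambda>x. f j k x th) \<in> borel_measurable lborel
                  \<and> integrable lborel (\<lambda>x. f j k x th) \<and> (\<integral>x. f j k x th \<partial>lborel) = 1"
    and pdf_g: "\<forall>p\<in>{1..P}. \<forall>j\<in>A p. \<forall>k\<in>{1..K j}. \<forall>th\<in>carrier_vec Dth. \<forall>tau\<in>carrier_vec (D p).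
                  (\<forall>x. 0 \<le> g j k x th tau) \<and> (\<lambda>x. g j k x th tau) \<in> borel_measurable lborel
                  \<and> integrable lborel (\<lambda>x. g j k x th tau) \<and> (\<integral>x. g j k x th tau \<partial>lborel) = 1"
    and prob_pos_diff: "\<forall>j\<in>{1..N}. \<forall>k\<in>{1..K j}. \<forall>r\<in>{1..R j}. \<forall>Th\<in>carrier_vec n.
                  0 < Pr j k r Th \<and> differentiable_vec n (Pr j k r) Th"
    and Th0: "Th0 \<in> carrier_vec n"
    and estimable: "\<forall>p\<in>{1..P}. invertible_mat (fisher_block n (par_off Dth D p) (D p) Pr (A p) K R Th0)"
    and JA0_nonsing: "invertible_mat (fisher_block n 0 Dth Pr (A 0) K R Th0)"
    and JTh_nonsing: "invertible_mat (fisher_block n 0 n Pr {1..N} K R Th0)"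
    and svd_th: "\<forall>p\<in>{1..P}. is_svd (Phi_mat n 0 Dth Pr (A p) K R Th0) (Uth p) (Lth p) (Vth p)"
    and svd_tau: "\<forall>p\<in>{1..P}. is_svd (Phi_mat n (par_off Dth D p) (D p) Pr (A p) K R Th0)
                                 (Utau p) (Ltau p) (Vtau p)"
  shows "loewner_le (lead_submat Dth (mat_inv (fisher_block n 0 n Pr {1..N} K R Th0)))
                    (mat_inv (fisher_block n 0 Dth Pr (A 0) K R Th0))
       \<and> (lead_submat Dth (mat_inv (fisher_block n 0 n Pr {1..N} K R Th0))
              = mat_inv (fisher_block n 0 Dth Pr (A 0) K R Th0)
          \<longleftrightarrow> (\<forall>p\<in>{1..P}. mat_range (Vth p * transpose_mat (Lth p))
                             \<subseteq> mat_range (Vtau p * transpose_mat (Ltau p))))"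
proof -
  \<comment> \<open>Only positivity and differentiability of the cell probabilities enter the argument.\<close>
  interpret quantized_network N P Dth D K R A I f g Th0
    using sensors_cover sensors_disj prob_pos_diff Th0 unfolding n_def Pr_def by unfold_locales
  have J: "fisher_block n 0 n Pr {1..N} K R Th0 = gram_mat n (triple_set {1..N} K R) w"
    using fisher_block_eq[of "{1..N}" 0 n] by (simp add: n_def Pr_def)
  have J0: "fisher_block n 0 Dth Pr (A 0) K R Th0 = gram_mat Dth (obs 0) w"
    using fisher_block_eq[OF A_subset, of 0 0 Dth] by (simp add: n_def Pr_def)
  interpret partial_gram_blocks n Dth "triple_set {1..N} K R" "obs 0" w P obs "par_off Dth D" D
    using partial_gram_blocks JTh_nonsing[unfolded J] JA0_nonsing[unfolded J0] by (simp add: n_def)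
  have "mat_range (Vth p * transpose_mat (Lth p)) \<subseteq> mat_range (Vtau p * transpose_mat (Ltau p))
      \<longleftrightarrow> factors_linearly (obs p) Dth (D p) w (\<lambda>t l. w t (par_off Dth D p + l))"
    if "p \<in> {1..P}" for p
    using svd_range_subset_iff_factors_linearly[OF finite_A svd_th[rule_format, OF that]
        svd_tau[rule_format, OF that]] that
    by (simp add: n_def Pr_def)
  then show ?thesis
    unfolding J J0 using loewner_le_lead_submat_inv lead_submat_inv_eq_iff by simp
qed

end
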